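(* For $n\ge2$, there is a well-defined surjective homomorphism $\psi_P:TVP_n\to A_n$ with $\psi_P(\lambda_{kl})=e$ for all $1\le k\ne l\le n$ and $\psi_P(\gamma_j)=\gamma_j$ for $1\le j\le n$, which restricts to the identity on $A_n$. Consequently, with $PL_n=\ker\psi_P$, one has $TVP_n=PL_n\rtimes A_n$.
   Context: For $n\ge 2$, the twisted virtual braid group $TVB_n$ is the group with generators $\sigma_1,\dots,\sigma_{n-1}$, $\rho_1,\dots,\rho_{n-1}$, $\gamma_1,\dots,\gamma_n$ and defining relations: $\sigma_i\sigma_{i+1}\sigma_i=\sigma_{i+1}\sigma_i\sigma_{i+1}$ ($1\le i\le n-2$); $\sigma_i\sigma_j=\sigma_j\sigma_i$ ($|i-j|\ge 2$); $\rho_i^2=1$; $\rho_i\rho_j=\rho_j\rho_i$ ($|i-j|\ge2$); $\rho_i\rho_{i+1}\rho_i=\rho_{i+1}\rho_i\rho_{i+1}$ ($1\le i\le n-2$); $\sigma_i\rho_j=\rho_j\sigma_i$ ($|i-j|\ge 2$); $\rho_i\rho_{i+1}\sigma_i=\sigma_{i+1}\rho_i\rho_{i+1}$ ($1\le i\le n-2$); $\gamma_i^2=1$ and $\gamma_i\gamma_j=\gamma_j\gamma_i$ (all $i,j$); $\gamma_j\rho_i=\rho_i\gamma_j$ and $\gamma_j\sigma_i=\sigma_i\gamma_j$ for $j\notin\{i,i+1\}$; $\rho_i\gamma_i=\gamma_{i+1}\rho_i$ ($1\le i\le n-1$); $\rho_i\sigma_i\rho_i=\gamma_{i+1}\gamma_i\sigma_i\gamma_i\gamma_{i+1}$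 ($1\le i\le n-1$). $\varphi_P:TVB_n\to S_n$ is the homomorphism with $\sigma_i\mapsto(i,i+1)$, $\rho_i\mapsto(i,i+1)$, $\gamma_j\mapsto e$, and $TVP_n=\ker\varphi_P$. $A_n=\langle\gamma_1,\dots,\gamma_n\rangle\le TVP_n$. In $TVB_n$ define $\lambda_{i,i+1}=\rho_i\sigma_i^{-1}$, $\lambda_{i+1,i}=\rho_i\lambda_{i,i+1}\rho_i$ ($1\le i\le n-1$), and for $1\le i<j-1\le n-1$: $\lambda_{ij}=\rho_{j-1}\cdots\rho_{i+1}\lambda_{i,i+1}\rho_{i+1}\cdots\rho_{j-1}$, $\lambda_{ji}=\rho_{j-1}\cdots\rho_{i+1}\lambda_{i+1,i}\rho_{i+1}\cdots\rho_{j-1}$. The elements $\lambda_{kl}$ and $\gamma_j$ generate $TVP_n$. *)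

theory Defs
  imports "HOL-Algebra.Algebra"
begin

datatype gen = Sg nat | Rh nat | Ga nat

type_synonym letter = "bool \<times> gen"   (* True = generator, False = its inverse *)
type_synonym word = "letter list"

definition pos :: "gen \<Rightarrow> letter" where "pos x = (True, x)"

definition inv_letter :: "letter \<Rightarrow> letter" where
  "inv_letter l = (\<not> fst l, snd l)"

definition inv_word :: "word \<Rightarrow> word" where
  "inv_word w = rev (map inv_letter w)"

definition gens :: "nat \<Rightarrow> gen set" where
  "gens n = {Sg i | i. 1 \<le> i \<and> i \<le> n - 1} \<union> {Rh i | i. 1 \<le> i \<and> i \<le> n - 1}
          \<union> {Ga j | j. 1 \<le> j \<and> j \<le> n}"

definition letters :: "nat \<Rightarrow> letter set" where
  "letters n = {l. snd l \<in> gens n}"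

definition rel :: "word \<Rightarrow> word \<Rightarrow> word" where
  "rel u v = u @ inv_word v"

definition relators :: "nat \<Rightarrow> word set" where
  "relators n =
     {rel (map pos [Sg i, Sg (i+1), Sg i]) (map pos [Sg (i+1), Sg i, Sg (i+1)]) | i. 1 \<le> i \<and> i \<le> n - 2}
   \<union> {rel (map pos [Sg i, Sg j]) (map pos [Sg j, Sg i]) | i j.
        1 \<le> i \<and> i \<le> n - 1 \<and> 1 \<le> j \<and> j \<le> n - 1 \<and> (i + 2 \<le> j \<or> j + 2 \<le> i)}
   \<union> {rel (map pos [Rh i, Rh i]) [] | i. 1 \<le> i \<and> i \<le> n - 1}
   \<union> {rel (map pos [Rh i, Rh j]) (map pos [Rh j, Rh i]) | i j.
        1 \<le> i \<and> i \<le> n - 1 \<and> 1 \<le> j \<and> j \<le> n - 1 \<and> (i + 2 \<le> j \<or> j + 2 \<le> i)}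
   \<union> {rel (map pos [Rh i, Rh (i+1), Rh i]) (map pos [Rh (i+1), Rh i, Rh (i+1)]) | i. 1 \<le> i \<and> i \<le> n - 2}
   \<union> {rel (map pos [Sg i, Rh j]) (map pos [Rh j, Sg i]) | i j.
        1 \<le> i \<and> i \<le> n - 1 \<and> 1 \<le> j \<and> j \<le> n - 1 \<and> (i + 2 \<le> j \<or> j + 2 \<le> i)}
   \<union> {rel (map pos [Rh i, Rh (i+1), Sg i]) (map pos [Sg (i+1), Rh i, Rh (i+1)]) | i. 1 \<le> i \<and> i \<le> n - 2}
   \<union> {rel (map pos [Ga i, Ga i]) [] | i. 1 \<le> i \<and> i \<le> n}
   \<union> {rel (map pos [Ga i, Ga j]) (map pos [Ga j, Ga i]) | i j. 1 \<le> i \<and> i \<le> n \<and> 1 \<le> j \<and> j \<le> n}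
   \<union> {rel (map pos [Ga j, Rh i]) (map pos [Rh i, Ga j]) | i j.
        1 \<le> i \<and> i \<le> n - 1 \<and> 1 \<le> j \<and> j \<le> n \<and> j \<noteq> i \<and> j \<noteq> i + 1}
   \<union> {rel (map pos [Ga j, Sg i]) (map pos [Sg i, Ga j]) | i j.
        1 \<le> i \<and> i \<le> n - 1 \<and> 1 \<le> j \<and> j \<le> n \<and> j \<noteq> i \<and> j \<noteq> i + 1}
   \<union> {rel (map pos [Rh i, Ga i]) (map pos [Ga (i+1), Rh i]) | i. 1 \<le> i \<and> i \<le> n - 1}
   \<union> {rel (map pos [Rh i, Sg i, Rh i]) (map pos [Ga (i+1), Ga i, Sg i, Ga i, Ga (i+1)]) | i. 1 \<le> i \<and> i \<le> n - 1}"

inductive eqv :: "nat \<Rightarrow> word \<Rightarrow> word \<Rightarrow> bool" for n where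
  refl: "set w \<subseteq> letters n \<Longrightarrow> eqv n w w"
| sym: "eqv n u v \<Longrightarrow> eqv n v u"
| trans: "eqv n u v \<Longrightarrow> eqv n v w \<Longrightarrow> eqv n u w"
| cancel: "set u \<subseteq> letters n \<Longrightarrow> set v \<subseteq> letters n \<Longrightarrow> x \<in> letters n \<Longrightarrow>
           eqv n (u @ [x, inv_letter x] @ v) (u @ v)"
| relator: "set u \<subseteq> letters n \<Longrightarrow> set v \<subseteq> letters n \<Longrightarrow> r \<in> relators n \<Longrightarrow>
           eqv n (u @ r @ v) (u @ v)"

definition cls :: "nat \<Rightarrow> word \<Rightarrow> word set" where
  "cls n w = {v. eqv n w v}"

definition TVB :: "nat \<Rightarrow> word set monoid" where
  "TVB n = \<lparr> carrier = {cls n w | w. set w \<subseteq> letters n},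
             Group.monoid.mult = (\<lambda>A B. {w. \<exists>a\<in>A. \<exists>b\<in>B. eqv n (a @ b) w}),
             Group.monoid.one = cls n [] \<rparr>"

definition transp :: "nat \<Rightarrow> nat \<Rightarrow> nat" where
  "transp i k = (if k = i then i + 1 else if k = i + 1 then i else k)"

fun perm_letter :: "letter \<Rightarrow> nat \<Rightarrow> nat" where
  "perm_letter (b, Sg i) = transp i"
| "perm_letter (b, Rh i) = transp i"
| "perm_letter (b, Ga j) = id"

definition perm_word :: "word \<Rightarrow> nat \<Rightarrow> nat" where
  "perm_word w = foldr (\<circ>) (map perm_letter w) id"

definition phiP :: "nat \<Rightarrow> word set \<Rightarrow> nat \<Rightarrow> nat" where
  "phiP n c = perm_word (SOME w. w \<in> c)"

definition TVP :: "nat \<Rightarrow> word set set" where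
  "TVP n = kernel (TVB n) (sym_group n) (phiP n)"

definition gam :: "nat \<Rightarrow> nat \<Rightarrow> word set" where
  "gam n j = cls n [pos (Ga j)]"

definition A :: "nat \<Rightarrow> word set set" where
  "A n = generate (TVB n) {gam n j | j. 1 \<le> j \<and> j \<le> n}"

text \<open>lambda_{i,i+1} = rho_i sigma_i^{-1}, lambda_{i+1,i} = rho_i lambda_{i,i+1} rho_i.\<close>
definition lam_up :: "nat \<Rightarrow> word" where
  "lam_up i = [(True, Rh i), (False, Sg i)]"

definition lam_down :: "nat \<Rightarrow> word" where
  "lam_down i = [pos (Rh i)] @ lam_up i @ [pos (Rh i)]"

definition rho_desc :: "nat \<Rightarrow> nat \<Rightarrow> word" where
  "rho_desc i j = map (\<lambda>k. pos (Rh k)) (rev [i+1..<j])"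

definition lam_word :: "nat \<Rightarrow> nat \<Rightarrow> word" where
  "lam_word k l = (if k < l then rho_desc k l @ lam_up k @ rev (rho_desc k l)
                   else rho_desc l k @ lam_down l @ rev (rho_desc l k))"

definition lam :: "nat \<Rightarrow> nat \<Rightarrow> nat \<Rightarrow> word set" where
  "lam n k l = cls n (lam_word k l)"

end

theory Submission
  imports Defs
begin

text \<open>Sending \<open>\<sigma>\<^sub>i\<close> and \<open>\<rho>\<^sub>i\<close> to the transposition \<open>(i, i+1)\<close> and \<open>\<gamma>\<^sub>j\<close> to the
  \<open>j\<close>-th unit vector defines a homomorphism from \<open>TVB\<^sub>n\<close> to the group of signed permutations
  \<open>S\<^sub>n \<ltimes> (\<int>/2)\<^sup>n\<close>, whose permutation part is \<open>\<phi>\<^sub>P\<close>. On \<open>TVP\<^sub>n = ker \<phi>\<^sub>P\<close> the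
  sign part \<open>V\<close> is therefore a homomorphism to \<open>(\<int>/2)\<^sup>n\<close>. Since the \<open>\<gamma>\<^sub>j\<close> are commuting
  involutions, every element of \<open>A\<^sub>n\<close> equals the ordered product \<open>\<gamma>\<^sup>V = \<Prod>\<^bsub>V j\<^esub> \<gamma>\<^sub>j\<close>
  of its own sign vector, so \<open>\<psi>\<^sub>P(x) = \<gamma>\<^bsup>V(x)\<^esup>\<close> is a homomorphism
  \<open>TVP\<^sub>n \<rightarrow> A\<^sub>n\<close> fixing \<open>A\<^sub>n\<close>; it kills the \<open>\<lambda>\<^sub>k\<^sub>l\<close>, which contain no \<open>\<gamma>\<close>.
  A retraction onto a subgroup splits the group as its kernel times that subgroup.\<close>

section \<open>The group \<open>TVB\<^sub>n\<close>\<close>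

lemma inv_letter_inv_letter [simp]: "inv_letter (inv_letter x) = x"
  by (simp add: inv_letter_def)

lemma inv_letter_in_letters_iff [simp]: "inv_letter x \<in> letters n \<longleftrightarrow> x \<in> letters n"
  by (simp add: inv_letter_def letters_def)

lemma inv_word_inv_word [simp]: "inv_word (inv_word w) = w"
  by (simp add: inv_word_def rev_map comp_def)

lemma set_inv_word_subset_letters_iff [simp]:
  "set (inv_word w) \<subseteq> letters n \<longleftrightarrow> set w \<subseteq> letters n"
  by (auto simp: inv_word_def)

lemma gens_iff [simp]:
  "Sg i \<in> gens n \<longleftrightarrow> 1 \<le> i \<and> i \<le> n - 1"
  "Rh i \<in> gens n \<longleftrightarrow> 1 \<le> i \<and> i \<le> n - 1"
  "Ga i \<in> gens n \<longleftrightarrow> 1 \<le> i \<and> i \<le> n"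
  by (auto simp: gens_def)

lemma letters_iff: "(b, g) \<in> letters n \<longleftrightarrow> g \<in> gens n"
  by (simp add: letters_def)

lemma relator_subset_letters: "r \<in> relators n \<Longrightarrow> set r \<subseteq> letters n"
  unfolding relators_def rel_def
  by (auto simp: inv_word_def inv_letter_def pos_def letters_iff)

lemma eqv_imp_letters: "eqv n u v \<Longrightarrow> set u \<subseteq> letters n \<and> set v \<subseteq> letters n"
  by (induction rule: eqv.induct) (auto dest: relator_subset_letters)

lemma eqv_append_right: "eqv n u v \<Longrightarrow> set x \<subseteq> letters n \<Longrightarrow> eqv n (u @ x) (v @ x)"
proof (induction rule: eqv.induct)
  case (refl w)
  then show ?case by (intro eqv.refl) simp
next
  case (cancel u v y)
  then show ?case using eqv.cancel[of u n "v @ x" y] by simp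
next
  case (relator u v r)
  then show ?case using eqv.relator[of u n "v @ x" r] by simp
qed (blast intro: eqv.sym eqv.trans)+

lemma eqv_append_left: "eqv n u v \<Longrightarrow> set x \<subseteq> letters n \<Longrightarrow> eqv n (x @ u) (x @ v)"
proof (induction rule: eqv.induct)
  case (refl w)
  then show ?case by (intro eqv.refl) simp
next
  case (cancel u v y)
  then show ?case using eqv.cancel[of "x @ u" n v y] by simp
next
  case (relator u v r)
  then show ?case using eqv.relator[of "x @ u" n v r] by simp
qed (blast intro: eqv.sym eqv.trans)+

lemma eqv_append: "eqv n u v \<Longrightarrow> eqv n u' v' \<Longrightarrow> eqv n (u @ u') (v @ v')"
  by (meson eqv.trans eqv_append_left eqv_append_right eqv_imp_letters)

lemma eqv_append_inv_word: "set u \<subseteq> letters n \<Longrightarrow> eqv n (u @ inv_word u) []"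
proof (induction u)
  case Nil
  then show ?case by (auto simp: inv_word_def intro: eqv.refl)
next
  case (Cons x u)
  have "eqv n ([x] @ (u @ inv_word u) @ [inv_letter x]) ([x] @ [] @ [inv_letter x])"
    using Cons by (intro eqv_append eqv.refl) auto
  moreover have "eqv n ([] @ [x, inv_letter x] @ []) ([] @ [])"
    using Cons.prems by (intro eqv.cancel) auto
  ultimately show ?case by (auto simp: inv_word_def intro: eqv.trans)
qed

lemma eqv_inv_word_append: "set u \<subseteq> letters n \<Longrightarrow> eqv n (inv_word u @ u) []"
  using eqv_append_inv_word[of "inv_word u" n] by simp

lemma eqv_if_rel_in_relators:
  assumes "rel u v \<in> relators n" "set u \<subseteq> letters n" "set v \<subseteq> letters n"
  shows "eqv n u v"
proof -
  have "eqv n ([] @ rel u v @ v) ([] @ v)"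
    using assms by (intro eqv.relator) auto
  moreover have "eqv n (u @ (inv_word v @ v)) (u @ [])"
    using assms by (intro eqv_append_left eqv_inv_word_append) auto
  ultimately show ?thesis
    by (auto simp: rel_def intro: eqv.trans eqv.sym)
qed

lemma cls_eq: "eqv n u v \<Longrightarrow> cls n u = cls n v"
  unfolding cls_def by (auto intro: eqv.trans eqv.sym)

lemma carrier_TVB: "carrier (TVB n) = {cls n w | w. set w \<subseteq> letters n}"
  by (simp add: TVB_def)

lemma cls_in_carrier_TVB [intro]: "set w \<subseteq> letters n \<Longrightarrow> cls n w \<in> carrier (TVB n)"
  by (auto simp: carrier_TVB)

lemma one_TVB: "\<one>\<^bsub>TVB n\<^esub> = cls n []"
  by (simp add: TVB_def)

lemma mult_TVB_cls:
  "set u \<subseteq> letters n \<Longrightarrow> set v \<subseteq> letters n \<Longrightarrow> cls n u \<otimes>\<^bsub>TVB n\<^esub> cls n v = cls n (u @ v)"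
  unfolding TVB_def cls_def by (auto intro: eqv.refl eqv.trans eqv_append)

lemma group_TVB: "group (TVB n)"
proof (rule groupI)
  fix x y
  assume "x \<in> carrier (TVB n)" "y \<in> carrier (TVB n)"
  then obtain u v where "x = cls n u" "set u \<subseteq> letters n" "y = cls n v" "set v \<subseteq> letters n"
    by (auto simp: carrier_TVB)
  then show "x \<otimes>\<^bsub>TVB n\<^esub> y \<in> carrier (TVB n)"
    using cls_in_carrier_TVB[of "u @ v" n] by (simp add: mult_TVB_cls)
next
  fix x y z
  assume "x \<in> carrier (TVB n)" "y \<in> carrier (TVB n)" "z \<in> carrier (TVB n)"
  then show "x \<otimes>\<^bsub>TVB n\<^esub> y \<otimes>\<^bsub>TVB n\<^esub> z = x \<otimes>\<^bsub>TVB n\<^esub> (y \<otimes>\<^bsub>TVB n\<^esub> z)"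
    by (auto simp: carrier_TVB mult_TVB_cls)
next
  fix x
  assume "x \<in> carrier (TVB n)"
  then obtain u where u: "x = cls n u" "set u \<subseteq> letters n"
    by (auto simp: carrier_TVB)
  then show "\<one>\<^bsub>TVB n\<^esub> \<otimes>\<^bsub>TVB n\<^esub> x = x"
    by (simp add: mult_TVB_cls one_TVB)
  have "cls n (inv_word u) \<otimes>\<^bsub>TVB n\<^esub> x = \<one>\<^bsub>TVB n\<^esub>"
    using u by (simp add: mult_TVB_cls one_TVB eqv_inv_word_append cls_eq)
  moreover have "cls n (inv_word u) \<in> carrier (TVB n)"
    using u by (simp add: cls_in_carrier_TVB)
  ultimately show "\<exists>y\<in>carrier (TVB n). y \<otimes>\<^bsub>TVB n\<^esub> x = \<one>\<^bsub>TVB n\<^esub>"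
    by blast
qed (auto simp: carrier_TVB one_TVB)

lemma inv_TVB_cls: "set u \<subseteq> letters n \<Longrightarrow> inv\<^bsub>TVB n\<^esub> (cls n u) = cls n (inv_word u)"
  by (rule group.inv_equality[OF group_TVB])
    (simp_all add: mult_TVB_cls one_TVB eqv_inv_word_append cls_eq cls_in_carrier_TVB)

section \<open>Signed permutations\<close>

type_synonym signed_perm = "(nat \<Rightarrow> nat) \<times> (nat \<Rightarrow> bool)"

text \<open>Multiplied as in \<open>S \<ltimes> (\<int>/2)\<^sup>\<nat>\<close>:
  \<open>(p, V) (q, W) = (p q, V \<circ> q + W)\<close>.\<close>

definition sp_mult :: "signed_perm \<Rightarrow> signed_perm \<Rightarrow> signed_perm" where
  "sp_mult a b = (fst a \<circ> fst b, \<lambda>k. snd a (fst b k) \<noteq> snd b k)"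

definition sp_one :: signed_perm where
  "sp_one = (id, \<lambda>_. False)"

fun letter_sp :: "letter \<Rightarrow> signed_perm" where
  "letter_sp (b, Sg i) = (transp i, \<lambda>_. False)"
| "letter_sp (b, Rh i) = (transp i, \<lambda>_. False)"
| "letter_sp (b, Ga j) = (id, \<lambda>k. k = j)"

fun word_sp :: "word \<Rightarrow> signed_perm" where
  "word_sp [] = sp_one"
| "word_sp (x # w) = sp_mult (letter_sp x) (word_sp w)"

lemma sp_mult_assoc: "sp_mult (sp_mult a b) c = sp_mult a (sp_mult b c)"
  by (auto simp: sp_mult_def)

lemma sp_mult_one [simp]: "sp_mult a sp_one = a" "sp_mult sp_one a = a"
  by (auto simp: sp_mult_def sp_one_def)

lemma sp_mult_letter_self: "sp_mult (letter_sp x) (letter_sp x) = sp_one"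
  by (cases x; cases "snd x") (auto simp: sp_mult_def sp_one_def transp_def)

lemma letter_sp_inv_letter [simp]: "letter_sp (inv_letter x) = letter_sp x"
  by (cases x; cases "snd x") (auto simp: inv_letter_def)

lemma word_sp_append: "word_sp (u @ v) = sp_mult (word_sp u) (word_sp v)"
  by (induction u) (auto simp: sp_mult_assoc)

lemma word_sp_append_inv_word: "word_sp (v @ inv_word v) = sp_one"
proof (induction v)
  case (Cons x v)
  have "word_sp ((x # v) @ inv_word (x # v))
      = sp_mult (letter_sp x) (sp_mult (word_sp (v @ inv_word v)) (letter_sp x))"
    by (simp add: inv_word_def word_sp_append sp_mult_assoc)
  with Cons show ?case by (simp add: sp_mult_letter_self)
qed (simp add: inv_word_def)

lemma word_sp_rel: "word_sp u = word_sp v \<Longrightarrow> word_sp (rel u v) = sp_one"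
  by (metis word_sp_append word_sp_append_inv_word rel_def)

lemma word_sp_relator: "r \<in> relators n \<Longrightarrow> word_sp r = sp_one"
  unfolding relators_def
  by (elim UnE; clarify; rule word_sp_rel) (auto simp: pos_def sp_mult_def sp_one_def transp_def)

lemma word_sp_eqv: "eqv n u v \<Longrightarrow> word_sp u = word_sp v"
proof (induction rule: eqv.induct)
  case (cancel u v x)
  then show ?case by (simp add: word_sp_append sp_mult_letter_self flip: sp_mult_assoc)
next
  case (relator u v r)
  then show ?case by (simp add: word_sp_append word_sp_relator)
qed simp_all

lemma fst_letter_sp: "fst (letter_sp x) = perm_letter x"
  by (cases x; cases "snd x") auto

lemma fst_word_sp: "fst (word_sp w) = perm_word w"
  by (induction w) (auto simp: perm_word_def sp_mult_def sp_one_def fst_letter_sp)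

lemma word_sp_some_in_cls: "set w \<subseteq> letters n \<Longrightarrow> word_sp (SOME v. v \<in> cls n w) = word_sp w"
proof -
  assume "set w \<subseteq> letters n"
  then have "w \<in> cls n w" by (simp add: cls_def eqv.refl)
  then have "(SOME v. v \<in> cls n w) \<in> cls n w" by (rule someI)
  then show ?thesis by (simp add: cls_def word_sp_eqv)
qed

section \<open>The subgroups \<open>TVP\<^sub>n\<close> and \<open>A\<^sub>n\<close>\<close>

lemma phiP_cls: "set w \<subseteq> letters n \<Longrightarrow> phiP n (cls n w) = perm_word w"
  by (simp add: phiP_def word_sp_some_in_cls flip: fst_word_sp)

lemma perm_word_append: "perm_word (u @ v) = perm_word u \<circ> perm_word v"
  by (simp add: word_sp_append sp_mult_def flip: fst_word_sp)

lemma perm_word_permutes: "set w \<subseteq> letters n \<Longrightarrow> perm_word w permutes {1..n}"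
proof (induction w)
  case Nil
  then show ?case using permutes_id[of "{1..n}"] by (simp add: perm_word_def id_def)
next
  case (Cons x w)
  have "transp i = Transposition.transpose i (i + 1)" for i
    by (auto simp: transp_def Transposition.transpose_def)
  then have "perm_letter x permutes {1..n}"
    using Cons.prems by (cases x; cases "snd x") (auto simp: letters_iff intro!: permutes_swap_id)
  moreover have "perm_word w permutes {1..n}"
    using Cons by simp
  ultimately have "perm_letter x \<circ> perm_word w permutes {1..n}"
    by (rule permutes_compose[rotated])
  moreover have "perm_word (x # w) = perm_letter x \<circ> perm_word w"
    by (simp add: perm_word_def)
  ultimately show ?case
    by (simp only:)
qed

lemma phiP_hom: "phiP n \<in> hom (TVB n) (sym_group n)"
proof (rule homI)
  fix x
  assume "x \<in> carrier (TVB n)"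
  then obtain w where "x = cls n w" "set w \<subseteq> letters n"
    by (auto simp: carrier_TVB)
  then show "phiP n x \<in> carrier (sym_group n)"
    using perm_word_permutes[of w n] by (simp add: phiP_cls sym_group_def)
next
  fix x y
  assume "x \<in> carrier (TVB n)" "y \<in> carrier (TVB n)"
  then show "phiP n (x \<otimes>\<^bsub>TVB n\<^esub> y) = phiP n x \<otimes>\<^bsub>sym_group n\<^esub> phiP n y"
    by (auto simp: carrier_TVB mult_TVB_cls phiP_cls sym_group_def perm_word_append)
qed

lemma subgroup_TVP: "subgroup (TVP n) (TVB n)"
  unfolding TVP_def
  by (intro group_hom.subgroup_kernel)
    (simp add: group_hom_def group_hom_axioms_def group_TVB sym_group_is_group phiP_hom)

lemma in_TVP_iff: "x \<in> TVP n \<longleftrightarrow> (\<exists>w. x = cls n w \<and> set w \<subseteq> letters n \<and> perm_word w = id)"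
  by (auto simp: TVP_def kernel_def carrier_TVB phiP_cls sym_group_def)

definition gamma_word :: "nat \<Rightarrow> word \<Rightarrow> bool" where
  "gamma_word n w \<longleftrightarrow> set w \<subseteq> letters n \<and> (\<forall>x\<in>set w. \<exists>j. snd x = Ga j)"

lemma gamma_word_append: "gamma_word n u \<Longrightarrow> gamma_word n v \<Longrightarrow> gamma_word n (u @ v)"
  by (auto simp: gamma_word_def)

lemma fst_word_sp_gamma_word: "gamma_word n w \<Longrightarrow> fst (word_sp w) = id"
  by (induction w) (auto simp: gamma_word_def sp_mult_def sp_one_def)

lemma inv_gam: "1 \<le> j \<Longrightarrow> j \<le> n \<Longrightarrow> inv\<^bsub>TVB n\<^esub> (gam n j) = cls n [(False, Ga j)]"
  by (simp add: gam_def inv_TVB_cls pos_def letters_iff inv_word_def inv_letter_def)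

lemma A_eq_gamma_words: "A n = {cls n w | w. gamma_word n w}"
proof
  show "A n \<subseteq> {cls n w | w. gamma_word n w}"
    unfolding A_def
  proof
    fix x
    assume "x \<in> generate (TVB n) {gam n j |j. 1 \<le> j \<and> j \<le> n}"
    then show "x \<in> {cls n w | w. gamma_word n w}"
    proof induction
      case one
      then show ?case by (auto simp: one_TVB gamma_word_def)
    next
      case (incl h)
      then show ?case by (auto simp: gam_def gamma_word_def pos_def letters_iff)
    next
      case (inv h)
      then show ?case by (auto simp: inv_gam gamma_word_def letters_iff)
    next
      case (eng h1 h2)
      then obtain u v where uv: "h1 = cls n u" "gamma_word n u" "h2 = cls n v" "gamma_word n v"
        by auto
      then have "h1 \<otimes>\<^bsub>TVB n\<^esub> h2 = cls n (u @ v)"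
        by (simp add: gamma_word_def mult_TVB_cls)
      then show ?case
        using gamma_word_append[OF uv(2,4)] by blast
    qed
  qed
next
  have "cls n w \<in> A n" if "gamma_word n w" for w
    using that
  proof (induction w)
    case Nil
    then show ?case using generate.one[of "TVB n"] by (simp add: A_def one_TVB)
  next
    case (Cons x w)
    then obtain b j where x: "x = (b, Ga j)" "1 \<le> j" "j \<le> n"
      by (cases x) (auto simp: gamma_word_def letters_iff)
    have w: "gamma_word n w" "set w \<subseteq> letters n"
      using Cons.prems by (auto simp: gamma_word_def)
    have "cls n [x] \<in> A n"
      using x by (cases b) (auto simp: A_def gam_def pos_def simp flip: inv_gam
          intro: generate.incl generate.inv)
    moreover have "cls n (x # w) = cls n [x] \<otimes>\<^bsub>TVB n\<^esub> cls n w"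
      using x w by (simp add: mult_TVB_cls letters_iff)
    ultimately show ?case
      using Cons.IH[OF w(1)] by (simp add: A_def generate.eng)
  qed
  then show "{cls n w | w. gamma_word n w} \<subseteq> A n"
    by blast
qed

lemma subgroup_A: "subgroup (A n) (TVB n)"
  unfolding A_def
  by (rule group.generate_is_subgroup[OF group_TVB]) (auto simp: gam_def pos_def letters_iff)

lemma A_subset_TVP: "A n \<subseteq> TVP n"
proof
  fix x
  assume "x \<in> A n"
  then obtain w where "x = cls n w" "gamma_word n w"
    by (auto simp: A_eq_gamma_words)
  then show "x \<in> TVP n"
    unfolding in_TVP_iff
    by (auto simp: gamma_word_def fst_word_sp_gamma_word simp flip: fst_word_sp)
qed

section \<open>Normal forms in \<open>A\<^sub>n\<close>\<close>

lemma eqv_gamma_commute: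
  assumes "1 \<le> i" "i \<le> n" "1 \<le> j" "j \<le> n"
  shows "eqv n [(True, Ga i), (True, Ga j)] [(True, Ga j), (True, Ga i)]"
proof -
  have "rel (map pos [Ga i, Ga j]) (map pos [Ga j, Ga i]) \<in> relators n"
    unfolding relators_def by (intro UnI1 UnI2) (use assms in blast)
  then show ?thesis
    using assms by (intro eqv_if_rel_in_relators) (auto simp: pos_def letters_iff)
qed

lemma eqv_gamma_square:
  assumes "1 \<le> j" "j \<le> n"
  shows "eqv n [(True, Ga j), (True, Ga j)] []"
proof -
  have "rel (map pos [Ga j, Ga j]) [] \<in> relators n"
    unfolding relators_def by (intro UnI1 UnI2) (use assms in blast)
  then show ?thesis
    using assms by (intro eqv_if_rel_in_relators) (auto simp: pos_def letters_iff)
qed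

lemma eqv_gamma_letter:
  assumes "1 \<le> j" "j \<le> n"
  shows "eqv n [(b, Ga j)] [(True, Ga j)]"
proof (cases b)
  case True
  then show ?thesis
    using assms by (simp add: eqv.refl letters_iff)
next
  case False
  have "eqv n ([(False, Ga j)] @ [(True, Ga j), (True, Ga j)]) ([(False, Ga j)] @ [])"
    using assms by (intro eqv_append_left eqv_gamma_square) (auto simp: letters_iff)
  moreover have "eqv n ([] @ [(False, Ga j), inv_letter (False, Ga j)] @ [(True, Ga j)]) ([] @ [(True, Ga j)])"
    using assms by (intro eqv.cancel) (auto simp: letters_iff)
  ultimately show ?thesis
    using False by (auto simp: inv_letter_def intro: eqv.trans eqv.sym)
qed

definition gammas :: "nat list \<Rightarrow> word" where
  "gammas L = map (\<lambda>j. (True, Ga j)) L"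

definition gamma_normal :: "nat \<Rightarrow> (nat \<Rightarrow> bool) \<Rightarrow> word" where
  "gamma_normal n V = gammas (filter V [1..<n+1])"

lemma set_gammas_subset_letters: "set L \<subseteq> {1..n} \<Longrightarrow> set (gammas L) \<subseteq> letters n"
  by (auto simp: gammas_def letters_iff)

lemma eqv_gamma_commute_gammas:
  "set L \<subseteq> {1..n} \<Longrightarrow> 1 \<le> j \<Longrightarrow> j \<le> n \<Longrightarrow>
    eqv n ((True, Ga j) # gammas L) (gammas L @ [(True, Ga j)])"
proof (induction L)
  case Nil
  then show ?case using eqv.refl[of "[(True, Ga j)]" n] by (simp add: gammas_def letters_iff)
next
  case (Cons l L)
  have "eqv n ([(True, Ga j), (True, Ga l)] @ gammas L) ([(True, Ga l), (True, Ga j)] @ gammas L)"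
    using Cons.prems by (intro eqv_append_right eqv_gamma_commute set_gammas_subset_letters) auto
  moreover have "eqv n ([(True, Ga l)] @ (True, Ga j) # gammas L) ([(True, Ga l)] @ gammas L @ [(True, Ga j)])"
    using Cons by (intro eqv_append_left) (auto simp: letters_iff)
  ultimately show ?case
    by (auto simp: gammas_def intro: eqv.trans)
qed

lemma set_gamma_normal_subset_letters: "set (gamma_normal n V) \<subseteq> letters n"
  unfolding gamma_normal_def by (rule set_gammas_subset_letters) auto

lemma gamma_word_gamma_normal: "gamma_word n (gamma_normal n V)"
  using set_gamma_normal_subset_letters by (auto simp: gamma_word_def gamma_normal_def gammas_def)

lemma gamma_normal_cong:
  "(\<And>k. 1 \<le> k \<Longrightarrow> k \<le> n \<Longrightarrow> V k = W k) \<Longrightarrow> gamma_normal n V = gamma_normal n W"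
  unfolding gamma_normal_def by (auto intro!: arg_cong[where f = gammas] filter_cong)

lemma gamma_normal_split:
  assumes "1 \<le> j" "j \<le> n"
  shows "gamma_normal n V = gammas (filter V [1..<j]) @ (if V j then [(True, Ga j)] else [])
                             @ gammas (filter V [j+1..<n+1])"
proof -
  have "[1..<n+1] = [1..<j] @ [j..<n+1]"
    using assms upt_add_eq_append[of 1 j "n + 1 - j"] by simp
  also have "[j..<n+1] = j # [j+1..<n+1]"
    using assms upt_conv_Cons[of j "n + 1"] by simp
  finally have "[1..<n+1] = [1..<j] @ j # [j+1..<n+1]" .
  then show ?thesis
    by (simp add: gamma_normal_def gammas_def del: upt_Suc)
qed

lemma snd_word_sp_gammas: "distinct L \<Longrightarrow> snd (word_sp (gammas L)) = (\<lambda>k. k \<in> set L)"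
proof (induction L)
  case (Cons l L)
  have "fst (word_sp (gammas L)) = id"
    by (induction L) (simp_all add: gammas_def sp_mult_def sp_one_def)
  with Cons show ?case
    by (auto simp: gammas_def sp_mult_def fun_eq_iff)
qed (simp add: gammas_def sp_one_def)

lemma snd_word_sp_gamma_normal:
  "1 \<le> k \<Longrightarrow> k \<le> n \<Longrightarrow> snd (word_sp (gamma_normal n V)) k = V k"
  by (simp add: gamma_normal_def snd_word_sp_gammas del: upt_Suc)

lemma eqv_gamma_cons_gamma_normal:
  assumes j: "1 \<le> j" "j \<le> n"
  shows "eqv n ((True, Ga j) # gamma_normal n V) (gamma_normal n (\<lambda>k. (k = j) \<noteq> V k))"
proof -
  define W where "W = (\<lambda>k. (k = j) \<noteq> V k)"
  define L where "L = gammas (filter V [1..<j])"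
  define M where "M = (if V j then [(True, Ga j)] else [])"
  define R where "R = gammas (filter V [j+1..<n+1])"
  have letters: "set L \<subseteq> letters n" "set M \<subseteq> letters n" "set R \<subseteq> letters n"
    unfolding L_def M_def R_def using j by (auto intro!: set_gammas_subset_letters simp: letters_iff)
  have V: "gamma_normal n V = L @ M @ R"
    using gamma_normal_split[OF j, of V] by (simp add: L_def M_def R_def)
  have "filter W [1..<j] = filter V [1..<j]" "filter W [j+1..<n+1] = filter V [j+1..<n+1]"
    by (auto simp: W_def intro!: filter_cong)
  then have W: "gamma_normal n W = L @ (if V j then [] else [(True, Ga j)]) @ R"
    using gamma_normal_split[OF j, of W] by (simp add: L_def R_def W_def)
  have "eqv n (((True, Ga j) # L) @ M @ R) ((L @ [(True, Ga j)]) @ M @ R)"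
    using j letters unfolding L_def by (intro eqv_append_right eqv_gamma_commute_gammas) auto
  moreover have "eqv n (L @ ((True, Ga j) # M) @ R) (gamma_normal n W)"
  proof (cases "V j")
    case True
    have "eqv n (L @ [(True, Ga j), (True, Ga j)] @ R) (L @ [] @ R)"
      using j letters by (intro eqv_append eqv.refl eqv_gamma_square) auto
    then show ?thesis using True W by (simp add: M_def)
  next
    case False
    then show ?thesis
      using j letters W by (simp add: M_def letters_iff eqv.refl)
  qed
  ultimately show ?thesis
    using V by (auto simp: W_def intro: eqv.trans)
qed

lemma eqv_gamma_normal: "gamma_word n w \<Longrightarrow> eqv n w (gamma_normal n (snd (word_sp w)))"
proof (induction w)
  case Nil
  have "gamma_normal n (snd (word_sp [])) = []"
    by (simp add: gamma_normal_def gammas_def sp_one_def del: upt_Suc)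
  then show ?case using eqv.refl[of "[]" n] by simp
next
  case (Cons x w)
  then obtain b j where x: "x = (b, Ga j)" "1 \<le> j" "j \<le> n"
    by (cases x) (auto simp: gamma_word_def letters_iff)
  have w: "gamma_word n w"
    using Cons.prems by (simp add: gamma_word_def)
  have "eqv n ([(b, Ga j)] @ w) ([(True, Ga j)] @ gamma_normal n (snd (word_sp w)))"
    using x Cons.IH[OF w] by (intro eqv_append eqv_gamma_letter)
  moreover have "snd (word_sp (x # w)) = (\<lambda>k. (k = j) \<noteq> snd (word_sp w) k)"
    using x fst_word_sp_gamma_word[OF w] by (simp add: sp_mult_def)
  ultimately show ?case
    using eqv_gamma_cons_gamma_normal[OF x(2,3)] x by (auto intro: eqv.trans)
qed

section \<open>The retraction \<open>\<psi>\<^sub>P\<close>\<close>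

text \<open>Well defined, because \<^const>\<open>word_sp\<close> is constant on congruence classes.\<close>
definition psiP :: "nat \<Rightarrow> word set \<Rightarrow> word set" where
  "psiP n c = cls n (gamma_normal n (snd (word_sp (SOME w. w \<in> c))))"

lemma psiP_cls: "set w \<subseteq> letters n \<Longrightarrow> psiP n (cls n w) = cls n (gamma_normal n (snd (word_sp w)))"
  by (simp add: psiP_def word_sp_some_in_cls)

lemma psiP_in_A: "x \<in> TVP n \<Longrightarrow> psiP n x \<in> A n"
  by (auto simp: in_TVP_iff psiP_cls A_eq_gamma_words intro!: gamma_word_gamma_normal)

lemma psiP_fixes_A: "a \<in> A n \<Longrightarrow> psiP n a = a"
proof -
  assume "a \<in> A n"
  then obtain w where w: "a = cls n w" "gamma_word n w"
    by (auto simp: A_eq_gamma_words)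
  then have "psiP n a = cls n (gamma_normal n (snd (word_sp w)))"
    by (simp add: psiP_cls gamma_word_def)
  also have "\<dots> = a"
    using w by (simp add: cls_eq[OF eqv_gamma_normal])
  finally show ?thesis .
qed

lemma psiP_mult:
  assumes x: "x \<in> TVP n" and y: "y \<in> TVP n"
  shows "psiP n (x \<otimes>\<^bsub>TVB n\<^esub> y) = psiP n x \<otimes>\<^bsub>TVB n\<^esub> psiP n y"
proof -
  obtain u where u: "x = cls n u" "set u \<subseteq> letters n"
    using x by (auto simp: in_TVP_iff)
  obtain v where v: "y = cls n v" "set v \<subseteq> letters n" "perm_word v = id"
    using y by (auto simp: in_TVP_iff)
  have v_id: "fst (word_sp v) = id"
    using v(3) by (simp add: fst_word_sp)
  define U where "U = gamma_normal n (snd (word_sp u))"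
  define V where "V = gamma_normal n (snd (word_sp v))"
  have "psiP n x \<otimes>\<^bsub>TVB n\<^esub> psiP n y = cls n (U @ V)"
    using u v by (simp add: psiP_cls mult_TVB_cls U_def V_def set_gamma_normal_subset_letters)
  also have "\<dots> = cls n (gamma_normal n (snd (word_sp (U @ V))))"
    by (intro cls_eq eqv_gamma_normal gamma_word_append) (simp_all add: U_def V_def gamma_word_gamma_normal)
  also have "gamma_normal n (snd (word_sp (U @ V))) = gamma_normal n (snd (word_sp (u @ v)))"
    by (rule gamma_normal_cong)
      (simp add: U_def V_def word_sp_append sp_mult_def snd_word_sp_gamma_normal v_id
        fst_word_sp_gamma_word[OF gamma_word_gamma_normal])
  finally show ?thesis
    using u v by (simp add: mult_TVB_cls psiP_cls)
qed

lemma psiP_hom: "psiP n \<in> hom ((TVB n)\<lparr>carrier := TVP n\<rparr>) ((TVB n)\<lparr>carrier := A n\<rparr>)"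
  by (rule homI) (simp_all add: psiP_in_A psiP_mult)

definition gamma_free :: "word \<Rightarrow> bool" where
  "gamma_free w \<longleftrightarrow> (\<forall>x\<in>set w. \<exists>i. snd x = Sg i \<or> snd x = Rh i)"

lemma snd_word_sp_gamma_free: "gamma_free w \<Longrightarrow> snd (word_sp w) = (\<lambda>_. False)"
  by (induction w) (auto simp: gamma_free_def sp_mult_def sp_one_def)

lemma gamma_free_append [simp]: "gamma_free (u @ v) \<longleftrightarrow> gamma_free u \<and> gamma_free v"
  by (auto simp: gamma_free_def)

lemma gamma_free_rev [simp]: "gamma_free (rev u) \<longleftrightarrow> gamma_free u"
  by (auto simp: gamma_free_def)

lemma rho_desc_gamma_free: "l \<le> n \<Longrightarrow> set (rho_desc k l) \<subseteq> letters n \<and> gamma_free (rho_desc k l)"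
  by (auto simp: rho_desc_def pos_def letters_iff gamma_free_def)

lemma lam_word_gamma_free:
  assumes "1 \<le> k" "k \<le> n" "1 \<le> l" "l \<le> n" "k \<noteq> l"
  shows "set (lam_word k l) \<subseteq> letters n \<and> gamma_free (lam_word k l)"
proof (cases "k < l")
  case True
  have "set (lam_up k) \<subseteq> letters n \<and> gamma_free (lam_up k)"
    using assms True by (auto simp: lam_up_def letters_iff gamma_free_def)
  then show ?thesis
    using True rho_desc_gamma_free[OF assms(4), of k] by (simp add: lam_word_def)
next
  case False
  have "set (lam_down l) \<subseteq> letters n \<and> gamma_free (lam_down l)"
    using assms False by (auto simp: lam_down_def lam_up_def pos_def letters_iff gamma_free_def)
  then show ?thesis
    using False rho_desc_gamma_free[OF assms(2), of l] by (simp add: lam_word_def)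
qed

lemma psiP_lam:
  "1 \<le> k \<Longrightarrow> k \<le> n \<Longrightarrow> 1 \<le> l \<Longrightarrow> l \<le> n \<Longrightarrow> k \<noteq> l \<Longrightarrow> psiP n (lam n k l) = \<one>\<^bsub>TVB n\<^esub>"
  using lam_word_gamma_free[of k n l]
  by (simp add: lam_def psiP_cls snd_word_sp_gamma_free one_TVB gamma_normal_def gammas_def del: upt_Suc)

lemma (in group) retraction_onto_subgroup:
  assumes K: "subgroup K G"
    and r: "r \<in> hom G (G\<lparr>carrier := K\<rparr>)"
    and r_fixes: "\<And>k. k \<in> K \<Longrightarrow> r k = k"
  shows "r ` carrier G = K"
    and "kernel G (G\<lparr>carrier := K\<rparr>) r \<lhd> G"
    and "kernel G (G\<lparr>carrier := K\<rparr>) r \<inter> K = {\<one>}"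
    and "kernel G (G\<lparr>carrier := K\<rparr>) r <#> K = carrier G"
proof -
  have KG: "K \<subseteq> carrier G"
    using K by (rule subgroup.subset)
  have r_into: "r x \<in> K" if "x \<in> carrier G" for x
    using hom_carrier[OF r] that by auto
  show "r ` carrier G = K"
  proof
    show "r ` carrier G \<subseteq> K"
      using r_into by blast
    show "K \<subseteq> r ` carrier G"
      using KG r_fixes by (metis image_eqI subsetI subsetD)
  qed
  have group_K: "group (G\<lparr>carrier := K\<rparr>)"
    using K by (rule subgroup_imp_group)
  show "kernel G (G\<lparr>carrier := K\<rparr>) r \<lhd> G"
    using r group_K
    by (intro group_hom.normal_kernel) (simp add: group_hom_def group_hom_axioms_def is_group)
  have incl: "id \<in> hom (G\<lparr>carrier := K\<rparr>) G"
    using KG by (intro homI) auto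
  have "r \<circ> id \<in> hom (G\<lparr>carrier := K\<rparr>) (G\<lparr>carrier := K\<rparr>)"
    using subsetD[OF KG] r_into hom_mult[OF r] by (intro homI) auto
  moreover have "bij_betw (r \<circ> id) K K"
    by (rule bij_betw_cong[THEN iffD2, OF _ bij_betw_id]) (simp add: r_fixes)
  ultimately have "r \<circ> id \<in> iso (G\<lparr>carrier := K\<rparr>) (G\<lparr>carrier := K\<rparr>)"
    by (simp add: iso_def)
  from group_semidirect_sum_ker_image[OF this incl r group_K is_group group_K]
  show "kernel G (G\<lparr>carrier := K\<rparr>) r \<inter> K = {\<one>}"
    and "kernel G (G\<lparr>carrier := K\<rparr>) r <#> K = carrier G"
    by simp_all
qed

theorem mainTheorem5:
  fixes n :: nat
  assumes "n \<ge> 2"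
  shows "\<exists>\<psi>. \<psi> \<in> hom ((TVB n)\<lparr>carrier := TVP n\<rparr>) ((TVB n)\<lparr>carrier := A n\<rparr>)
          \<and> \<psi> ` TVP n = A n
          \<and> (\<forall>k \<in> {1..n}. \<forall>l \<in> {1..n}. k \<noteq> l \<longrightarrow> \<psi> (lam n k l) = \<one>\<^bsub>TVB n\<^esub>)
          \<and> (\<forall>j \<in> {1..n}. \<psi> (gam n j) = gam n j)
          \<and> (\<forall>a \<in> A n. \<psi> a = a)
          \<and> (let PL = kernel ((TVB n)\<lparr>carrier := TVP n\<rparr>) ((TVB n)\<lparr>carrier := A n\<rparr>) \<psi>
             in PL \<lhd> (TVB n)\<lparr>carrier := TVP n\<rparr>
                \<and> subgroup (A n) ((TVB n)\<lparr>carrier := TVP n\<rparr>)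
                \<and> PL \<inter> A n = {\<one>\<^bsub>TVB n\<^esub>}
                \<and> PL <#>\<^bsub>TVB n\<^esub> A n = TVP n)"
proof -
  let ?P = "(TVB n)\<lparr>carrier := TVP n\<rparr>"
  have group_P: "group ?P"
    by (rule group.subgroup_imp_group[OF group_TVB subgroup_TVP])
  have A_sub_P: "subgroup (A n) ?P"
    by (rule group.subgroup_incl[OF group_TVB subgroup_A subgroup_TVP A_subset_TVP])
  have gam_in_A: "gam n j \<in> A n" if "j \<in> {1..n}" for j
    using that unfolding A_def by (auto intro: generate.incl)
  note retraction = group.retraction_onto_subgroup[OF group_P A_sub_P, of "psiP n"]
  show ?thesis
    using retraction psiP_hom psiP_fixes_A psiP_lam gam_in_A A_sub_P
    by (intro exI[of _ "psiP n"]) (simp add: Let_def set_mult_def)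
qed

end
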